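(* Let $D$ be a square-free integer, $p$ an odd prime, $k,\ell$ positive integers and $c_D$ a positive integer with $\gcd(c_D k, p) = 1$. Let $N = c_D k p^{\ell} - 1$ be an odd prime with $\left(\frac{D}{N}\right) = -1$, and let $w \in \mathcal{G}_N(D)$. Then one of the following holds: (i) $w^{c_D k} \equiv 1 \pmod{N}$; (ii) there exists an integer $j$ with $0 \le j < \ell$ such that $\Phi_p\bigl(w^{c_D k p^j}\bigr) \equiv 0 \pmod{N}$, where $\Phi_p$ is the $p$-th cyclotomic polynomial.
   Context: For an integer $n \ge 2$ and a square-free integer $D$: if $D \equiv 2,3 \pmod 4$, let $\mathcal{I}_n(D) = \{a + b\sqrt{D} : a,b \in \mathbb{Z}/n\mathbb{Z}\}$ (the ring $\mathbb{Z}[\sqrt D]/n\mathbb{Z}[\sqrt D]$) and $\mathcal{G}_n(D) = \{a + b\sqrt{D} \in \mathcal{I}_n(D) : a^2 - Db^2 \equiv 1 \pmod n\}$; if $D \equiv 1 \pmod 4$, let $\omega = \frac{1+\sqrt D}{2}$, $\mathcal{I}_n(D) = \{a + b\omega : a,b \in \mathbb{Z}/n\mathbb{Z}\}$ (the ring $\mathbb{Z}[\omega]/n\mathbb{Z}[\omega]$) and $\mathcal{G}_n(D) = \{a + b\omega \in \mathcal{I}_n(D) : a^2 + ab + \frac{1-D}{4} b^2 \equiv 1 \pmod n\}$. Powers are computed in $\mathcal{I}_n(D)$, a congruence $x \equiv y \pmod n$ for $x,y \in \mathcal{I}_n(D)$ means equality in $\mathcal{I}_n(D)$, and polynomials are evaluated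 in $\mathcal{I}_n(D)$. *)

theory Defs
  imports "HOL-Number_Theory.Number_Theory" "HOL-Computational_Algebra.Computational_Algebra"
    "HOL-Analysis.Analysis"
begin

text \<open>Elements a + b*sqrt D (D mod 4 \<noteq> 1) resp. a + b*omega, omega = (1+sqrt D)/2
  (D mod 4 = 1), of I_n(D), represented by pairs (a,b) of integers reduced mod n.\<close>

definition qnorm_red :: "int \<Rightarrow> int \<times> int \<Rightarrow> int \<times> int" where
  "qnorm_red n x = (fst x mod n, snd x mod n)"

definition qmul :: "int \<Rightarrow> int \<Rightarrow> int \<times> int \<Rightarrow> int \<times> int \<Rightarrow> int \<times> int" where
  "qmul n D x y = (case x of (a, b) \<Rightarrow> case y of (c, d) \<Rightarrow>
     (if D mod 4 = 1
      then qnorm_red n (a * c + b * d * ((D - 1) div 4), a * d + b * c + b * d)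
      else qnorm_red n (a * c + D * b * d, a * d + b * c)))"

definition qone :: "int \<Rightarrow> int \<times> int" where
  "qone n = qnorm_red n (1, 0)"

fun qpow :: "int \<Rightarrow> int \<Rightarrow> int \<times> int \<Rightarrow> nat \<Rightarrow> int \<times> int" where
  "qpow n D x 0 = qone n"
| "qpow n D x (Suc m) = qmul n D x (qpow n D x m)"

definition qadd :: "int \<Rightarrow> int \<times> int \<Rightarrow> int \<times> int \<Rightarrow> int \<times> int" where
  "qadd n x y = qnorm_red n (fst x + fst y, snd x + snd y)"

definition qsmult :: "int \<Rightarrow> int \<Rightarrow> int \<times> int \<Rightarrow> int \<times> int" where
  "qsmult n c x = qnorm_red n (c * fst x, c * snd x)"

definition qpoly_eval :: "int \<Rightarrow> int \<Rightarrow> int poly \<Rightarrow> int \<times> int \<Rightarrow> int \<times> int" where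
  "qpoly_eval n D f x =
     foldr (qadd n) (map (\<lambda>i. qsmult n (coeff f i) (qpow n D x i)) [0..<Suc (degree f)])
       (qnorm_red n (0, 0))"

definition qG :: "int \<Rightarrow> int \<Rightarrow> (int \<times> int) set" where
  "qG n D = {(a, b). 0 \<le> a \<and> a < n \<and> 0 \<le> b \<and> b < n \<and>
     (if D mod 4 = 1 then [a^2 + a * b + ((1 - D) div 4) * b^2 = 1] (mod n)
      else [a^2 - D * b^2 = 1] (mod n))}"

definition cyclotomic :: "nat \<Rightarrow> int poly" where
  "cyclotomic n = (THE q. map_poly of_int q =
     (\<Prod>k\<in>{k\<in>{1..n}. coprime k n}. [: - cis (2 * pi * real k / real n), 1 :]))"

end

theory Submission
  imports Defs
begin

text \<open>
  Let F be the minimal polynomial of \<open>\<surd>D\<close> (resp. \<open>\<omega>\<close>). Then I_n(D) is \<open>\<int>[x]/(n, F)\<close>,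
  the pair (a, b) being the class of a + b x, so identities in I_n(D) can be proved as
  congruences between integer polynomials. Since D is not a square modulo the prime N,
  I_N(D) is a field whose Frobenius map is conjugation (by Euler's criterion
  \<open>\<surd>D ^ N = - \<surd>D\<close>); hence every w of norm one satisfies \<open>w ^ (N + 1) = 1\<close>, where
  \<open>N + 1 = c k p ^ l\<close>. If \<open>w ^ (c k) \<noteq> 1\<close>, let j < l be the last exponent with
  \<open>v = w ^ (c k p ^ j) \<noteq> 1\<close>. Then \<open>v ^ p = 1\<close>, and \<open>(v - 1) \<Phi>\<^sub>p(v) = v ^ p - 1 = 0\<close> in a field
  forces \<open>\<Phi>\<^sub>p(v) = 0\<close>.
\<close>

lemma add_power_prime_obtain:
  fixes x y :: "'a::comm_ring_1"
  assumes "prime p"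
  obtains r where "(x + y) ^ p = x ^ p + y ^ p + of_nat p * r"
proof -
  have p: "0 < p" using assms prime_gt_0_nat by blast
  define r where "r = (\<Sum>k\<in>{1..<p}. of_nat ((p choose k) div p) * x ^ k * y ^ (p - k) :: 'a)"
  have middle: "of_nat (p choose k) * x ^ k * y ^ (p - k)
      = of_nat p * (of_nat ((p choose k) div p) * x ^ k * y ^ (p - k))"
    if "k \<in> {1..<p}" for k
  proof -
    have "p dvd p choose k" using dvd_choose_prime[of k p] assms that by auto
    then show ?thesis by (metis (no_types, lifting) dvd_mult_div_cancel mult.assoc of_nat_mult)
  qed
  have "{..p} = insert 0 (insert p {1..<p})" using p by auto
  then have "(x + y) ^ p = y ^ p + x ^ p + (\<Sum>k\<in>{1..<p}. of_nat (p choose k) * x ^ k * y ^ (p - k))"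
    using p by (simp add: binomial_ring)
  also have "\<dots> = x ^ p + y ^ p + of_nat p * r"
    unfolding r_def by (simp add: middle sum_distrib_left)
  finally show ?thesis by (rule that)
qed

lemma fermat_little_int:
  fixes a :: int
  assumes "prime p"
  shows "[a ^ p = a] (mod int p)"
proof -
  have p: "0 < p" using assms prime_gt_0_nat by blast
  have "[int m ^ p = int m] (mod int p)" for m
  proof (induction m)
    case 0
    then show ?case using p by (simp add: zero_power)
  next
    case (Suc m)
    obtain r where "(int m + 1) ^ p = int m ^ p + 1 ^ p + int p * r"
      using add_power_prime_obtain[OF assms] by blast
    then have "[int (Suc m) ^ p = int m ^ p + 1] (mod int p)"
      by (simp add: cong_iff_dvd_diff add.commute)
    also have "[int m ^ p + 1 = int m + 1] (mod int p)"
      using Suc.IH by (rule cong_add) simp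
    finally show ?case by (simp add: add.commute)
  qed
  moreover obtain m where "a mod int p = int m"
    using p by (metis pos_mod_sign of_nat_0_less_iff nonneg_int_cases)
  ultimately have reduced: "[(a mod int p) ^ p = a mod int p] (mod int p)" by simp
  have "[a ^ p = (a mod int p) ^ p] (mod int p)" by (intro cong_pow) simp
  also note reduced
  also have "[a mod int p = a] (mod int p)" by simp
  finally show ?thesis .
qed


section \<open>Congruence modulo an ideal (n, F) of \<open>\<int>[x]\<close>\<close>

definition pcong :: "int \<Rightarrow> int poly \<Rightarrow> int poly \<Rightarrow> int poly \<Rightarrow> bool" where
  "pcong n F P Q \<longleftrightarrow> (\<exists>A B. P - Q = smult n A + F * B)"

lemma pcong_refl [simp]: "pcong n F P P"
  unfolding pcong_def by (rule exI[of _ 0], rule exI[of _ 0]) simp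

lemma pcong_sym: "pcong n F P Q \<Longrightarrow> pcong n F Q P"
  unfolding pcong_def by (metis minus_diff_eq minus_add_distrib mult_minus_right smult_minus_right)

lemma pcong_trans [trans]: "pcong n F P Q \<Longrightarrow> pcong n F Q R \<Longrightarrow> pcong n F P R"
proof -
  assume "pcong n F P Q" "pcong n F Q R"
  then obtain A1 B1 A2 B2 where "P - Q = smult n A1 + F * B1" "Q - R = smult n A2 + F * B2"
    unfolding pcong_def by blast
  then have "P - R = smult n (A1 + A2) + F * (B1 + B2)"
    by (simp add: algebra_simps smult_add_right)
  then show ?thesis unfolding pcong_def by blast
qed

lemma pcong_iff_diff: "pcong n F P Q \<longleftrightarrow> pcong n F (P - Q) 0"
  unfolding pcong_def by simp

lemma pcong_add: "pcong n F P Q \<Longrightarrow> pcong n F R S \<Longrightarrow> pcong n F (P + R) (Q + S)"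
proof -
  assume "pcong n F P Q" "pcong n F R S"
  then obtain A1 B1 A2 B2 where "P - Q = smult n A1 + F * B1" "R - S = smult n A2 + F * B2"
    unfolding pcong_def by blast
  then have "P + R - (Q + S) = smult n (A1 + A2) + F * (B1 + B2)"
    by (simp add: algebra_simps smult_add_right)
  then show ?thesis unfolding pcong_def by blast
qed

lemma pcong_diff: "pcong n F P Q \<Longrightarrow> pcong n F R S \<Longrightarrow> pcong n F (P - R) (Q - S)"
proof -
  assume "pcong n F P Q" "pcong n F R S"
  then obtain A1 B1 A2 B2 where "P - Q = smult n A1 + F * B1" "R - S = smult n A2 + F * B2"
    unfolding pcong_def by blast
  then have "P - R - (Q - S) = smult n (A1 - A2) + F * (B1 - B2)"
    by (simp add: algebra_simps smult_diff_right)
  then show ?thesis unfolding pcong_def by blast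
qed

lemma pcong_mult: "pcong n F P Q \<Longrightarrow> pcong n F R S \<Longrightarrow> pcong n F (P * R) (Q * S)"
proof -
  assume "pcong n F P Q" "pcong n F R S"
  then obtain A1 B1 A2 B2 where h: "P - Q = smult n A1 + F * B1" "R - S = smult n A2 + F * B2"
    unfolding pcong_def by blast
  have "P * R - Q * S = P * (R - S) + (P - Q) * S" by (simp add: algebra_simps)
  also have "\<dots> = smult n (P * A2 + A1 * S) + F * (P * B2 + B1 * S)"
    unfolding h by (simp add: algebra_simps smult_add_right)
  finally show ?thesis unfolding pcong_def by blast
qed

lemma pcong_power: "pcong n F P Q \<Longrightarrow> pcong n F (P ^ m) (Q ^ m)"
  by (induction m) (auto intro: pcong_mult)

lemma pcong_sum: "(\<And>i. i \<in> I \<Longrightarrow> pcong n F (f i) (g i)) \<Longrightarrow> pcong n F (sum f I) (sum g I)"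
  by (induction I rule: infinite_finite_induct) (auto intro: pcong_add)

lemma pcong_add_multiple: "pcong n F (P + F * B) P"
  unfolding pcong_def by (rule exI[of _ 0], rule exI[of _ B]) simp

lemma pcong_coeffwise:
  assumes "\<And>i. [coeff P i = coeff Q i] (mod n)"
  shows "pcong n F P Q"
proof -
  define A where "A = map_poly (\<lambda>c. c div n) (P - Q)"
  have "P - Q = smult n A"
  proof (rule poly_eqI)
    fix i
    have "n dvd coeff P i - coeff Q i" using assms cong_iff_dvd_diff by blast
    then show "coeff (P - Q) i = coeff (smult n A) i" by (simp add: A_def coeff_map_poly)
  qed
  then have "P - Q = smult n A + F * 0" by simp
  then show ?thesis unfolding pcong_def by blast
qed

lemma pcong_const: "[a = b] (mod n) \<Longrightarrow> pcong n F [:a:] [:b:]"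
  by (rule pcong_coeffwise) (simp add: coeff_pCons split: nat.split)

lemma pcong_cancel_const:
  assumes "coprime a n" and "pcong n F ([:a:] * P) ([:a:] * Q)"
  shows "pcong n F P Q"
proof -
  obtain b where "[a * b = 1] (mod n)" using assms(1) cong_solve_coprime_int by blast
  then have ab: "pcong n F [:a * b:] 1" by (simp add: pcong_const one_pCons)
  have "P = 1 * P" by simp
  also have "pcong n F (1 * P) ([:a * b:] * P)" by (rule pcong_mult[OF pcong_sym[OF ab] pcong_refl])
  also have "[:a * b:] * P = [:b:] * ([:a:] * P)" by (simp add: algebra_simps)
  also have "pcong n F ([:b:] * ([:a:] * P)) ([:b:] * ([:a:] * Q))"
    by (rule pcong_mult[OF pcong_refl assms(2)])
  also have "[:b:] * ([:a:] * Q) = [:a * b:] * Q" by (simp add: algebra_simps)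
  also have "pcong n F ([:a * b:] * Q) (1 * Q)" by (rule pcong_mult[OF ab pcong_refl])
  finally show ?thesis by simp
qed

lemma pcong_0_imp_dvd_coeff:
  assumes n: "n > 0" and monic: "lead_coeff F = 1" and deg: "degree P < degree F"
    and "pcong n F P 0"
  shows "n dvd coeff P i"
proof -
  obtain A B where AB: "P = smult n A + F * B" using assms(4) unfolding pcong_def by auto
  define B1 where "B1 = map_poly (\<lambda>c. c div n) B"
  define B2 where "B2 = map_poly (\<lambda>c. c mod n) B"
  have cB2: "coeff B2 j = coeff B j mod n" for j unfolding B2_def by (simp add: coeff_map_poly)
  have "B = smult n B1 + B2"
    by (rule poly_eqI) (simp add: B1_def cB2 coeff_map_poly)
  then have E: "P - F * B2 = smult n (A + F * B1)"
    using AB by (simp add: algebra_simps smult_add_right)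
  txt \<open>The reduced quotient B2 has coefficients in [0, n); comparing top coefficients kills it.\<close>
  have "B2 = 0"
  proof (rule ccontr)
    assume "B2 \<noteq> 0"
    define d where "d = degree B2 + degree F"
    have "F \<noteq> 0" using monic by auto
    then have "degree (F * B2) = d" using \<open>B2 \<noteq> 0\<close> by (simp add: d_def degree_mult_eq)
    then have "coeff (F * B2) d = lead_coeff B2" using monic by (metis lead_coeff_mult mult_1)
    moreover have "coeff P d = 0" using deg by (simp add: d_def coeff_eq_0)
    ultimately have "- lead_coeff B2 = coeff (P - F * B2) d" by simp
    also have "\<dots> = n * coeff (A + F * B1) d" unfolding E by (rule coeff_smult)
    finally have "n dvd lead_coeff B2" by (metis dvdI dvd_minus_iff)
    moreover have "0 \<le> lead_coeff B2" "lead_coeff B2 < n" using cB2 n by auto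
    ultimately have "lead_coeff B2 = 0" using zdvd_imp_le by fastforce
    with \<open>B2 \<noteq> 0\<close> show False by simp
  qed
  then show ?thesis using E by simp
qed

lemma pcong_frobenius:
  assumes "prime N"
  shows "pcong (int N) F ((P + Q) ^ N) (P ^ N + Q ^ N)"
proof -
  obtain r where "(P + Q) ^ N = P ^ N + Q ^ N + of_nat N * r"
    using add_power_prime_obtain[OF assms] by blast
  then have "(P + Q) ^ N - (P ^ N + Q ^ N) = smult (int N) r + F * 0"
    by (simp add: of_nat_poly)
  then show ?thesis unfolding pcong_def by blast
qed

lemma pcong_linear_power_prime:
  assumes "prime N"
  shows "pcong (int N) F ([:a, b:] ^ N) ([:a:] + [:b:] * [:0, 1:] ^ N)"
proof -
  have "[:a, b:] = [:a:] + [:b:] * [:0, 1:]" by simp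
  then have "pcong (int N) F ([:a, b:] ^ N) ([:a:] ^ N + [:b:] ^ N * [:0, 1:] ^ N)"
    using pcong_frobenius[OF assms] by (metis power_mult_distrib)
  also have "pcong (int N) F ([:a:] ^ N + [:b:] ^ N * [:0, 1:] ^ N) ([:a:] + [:b:] * [:0, 1:] ^ N)"
    using fermat_little_int[OF assms]
    by (intro pcong_add pcong_mult pcong_refl) (simp_all add: poly_const_pow pcong_const)
  finally show ?thesis .
qed


section \<open>Elements of I_n(D) as linear polynomials\<close>

definition qminpoly :: "int \<Rightarrow> int poly" where
  "qminpoly D = (if D mod 4 = 1 then [:-((D - 1) div 4), -1, 1:] else [:-D, 0, 1:])"

definition qlin :: "int \<times> int \<Rightarrow> int poly" where
  "qlin x = [:fst x, snd x:]"

lemma degree_qminpoly: "degree (qminpoly D) = 2"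
  and lead_coeff_qminpoly: "lead_coeff (qminpoly D) = 1"
  by (auto simp: qminpoly_def)

lemma qlin_qnorm_red: "pcong n F (qlin (qnorm_red n x)) (qlin x)"
  by (rule pcong_coeffwise) (simp add: qlin_def qnorm_red_def coeff_pCons split: nat.split)

lemma qlin_qone: "pcong n F (qlin (qone n)) 1"
  using qlin_qnorm_red[of n F "(1, 0)"] by (simp add: qone_def qlin_def one_pCons)

lemma qlin_qmul: "pcong n (qminpoly D) (qlin (qmul n D x y)) (qlin x * qlin y)"
proof -
  obtain a b c d where xy: "x = (a, b)" "y = (c, d)" by force
  obtain z where "qmul n D x y = qnorm_red n z" and "qlin x * qlin y = qlin z + qminpoly D * [:b * d:]"
  proof (cases "D mod 4 = 1")
    case True
    show ?thesis
      by (rule that[of "(a * c + b * d * ((D - 1) div 4), a * d + b * c + b * d)"])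
        (simp_all add: xy True qmul_def qlin_def qminpoly_def algebra_simps)
  next
    case False
    show ?thesis
      by (rule that[of "(a * c + D * b * d, a * d + b * c)"])
        (simp_all add: xy False qmul_def qlin_def qminpoly_def algebra_simps)
  qed
  then show ?thesis
    using qlin_qnorm_red pcong_sym[OF pcong_add_multiple] pcong_trans by metis
qed

lemma qlin_qpow: "pcong n (qminpoly D) (qlin (qpow n D x m)) (qlin x ^ m)"
proof (induction m)
  case 0
  then show ?case using qlin_qone by simp
next
  case (Suc m)
  then show ?case using pcong_trans[OF qlin_qmul pcong_mult[OF pcong_refl Suc.IH]] by simp
qed

lemma qlin_qadd: "pcong n F (qlin (qadd n x y)) (qlin x + qlin y)"
  using qlin_qnorm_red[of n F "(fst x + fst y, snd x + snd y)"]
  by (simp add: qadd_def qlin_def)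

lemma qlin_qsmult: "pcong n F (qlin (qsmult n c x)) ([:c:] * qlin x)"
  using qlin_qnorm_red[of n F "(c * fst x, c * snd x)"]
  by (simp add: qsmult_def qlin_def mult.commute)

lemma qlin_foldr_qadd: "pcong n F (qlin (foldr (qadd n) xs z)) (sum_list (map qlin xs) + qlin z)"
proof (induction xs)
  case Nil
  then show ?case by simp
next
  case (Cons x xs)
  have "pcong n F (qlin (foldr (qadd n) (x # xs) z)) (qlin x + qlin (foldr (qadd n) xs z))"
    by (simp add: qlin_qadd)
  also have "pcong n F \<dots> (qlin x + (sum_list (map qlin xs) + qlin z))"
    by (rule pcong_add[OF pcong_refl Cons.IH])
  finally show ?case by (simp add: add.assoc)
qed

lemma qlin_qpoly_eval:
  "pcong n (qminpoly D) (qlin (qpoly_eval n D f x)) (\<Sum>i\<le>degree f. [:coeff f i:] * qlin x ^ i)"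
proof -
  define g where "g i = qsmult n (coeff f i) (qpow n D x i)" for i
  have "pcong n (qminpoly D) (qlin (qpoly_eval n D f x))
      (sum_list (map qlin (map g [0..<Suc (degree f)])) + qlin (qnorm_red n (0, 0)))"
    unfolding qpoly_eval_def g_def by (rule qlin_foldr_qadd)
  also have "sum_list (map qlin (map g [0..<Suc (degree f)])) = (\<Sum>i\<le>degree f. qlin (g i))"
    by (simp only: map_map sum_set_upt_conv_sum_list_nat[symmetric] set_upt atLeast0LessThan
        lessThan_Suc_atMost o_def)
  also have "pcong n (qminpoly D) ((\<Sum>i\<le>degree f. qlin (g i)) + qlin (qnorm_red n (0, 0)))
      ((\<Sum>i\<le>degree f. [:coeff f i:] * qlin x ^ i) + qlin (0, 0))"
  proof (rule pcong_add[OF pcong_sum qlin_qnorm_red])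
    fix i
    show "pcong n (qminpoly D) (qlin (g i)) ([:coeff f i:] * qlin x ^ i)"
      unfolding g_def using qlin_qsmult pcong_mult[OF pcong_refl qlin_qpow] by (rule pcong_trans)
  qed
  finally show ?thesis by (simp add: qlin_def)
qed

lemma qnorm_red_mem: "n > 0 \<Longrightarrow> qnorm_red n x \<in> {0..<n} \<times> {0..<n}"
  by (simp add: qnorm_red_def mem_Times_iff)

lemma qpow_mem: "n > 0 \<Longrightarrow> qpow n D x m \<in> {0..<n} \<times> {0..<n}"
  by (cases m) (simp_all add: qone_def qmul_def qnorm_red_mem split: prod.split)

lemma qpoly_eval_mem:
  assumes "n > 0"
  shows "qpoly_eval n D f x \<in> {0..<n} \<times> {0..<n}"
proof -
  have foldr: "foldr (qadd n) xs z \<in> {0..<n} \<times> {0..<n}" if "z \<in> {0..<n} \<times> {0..<n}" for xs z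
    using that assms by (induction xs) (simp_all add: qadd_def qnorm_red_mem)
  show ?thesis unfolding qpoly_eval_def by (rule foldr) (rule qnorm_red_mem[OF assms])
qed

lemma pcong_qlin_0_iff:
  assumes "n > 0"
  shows "pcong n (qminpoly D) (qlin x) 0 \<longleftrightarrow> n dvd fst x \<and> n dvd snd x"
proof
  assume "pcong n (qminpoly D) (qlin x) 0"
  moreover have "degree (qlin x) < degree (qminpoly D)"
    using degree_pCons_le[of "fst x" "[:snd x:]"] by (simp add: qlin_def degree_qminpoly)
  ultimately have "n dvd coeff (qlin x) 0" "n dvd coeff (qlin x) 1"
    using pcong_0_imp_dvd_coeff[OF assms lead_coeff_qminpoly] by blast+
  then show "n dvd fst x \<and> n dvd snd x" by (simp add: qlin_def)
next
  assume "n dvd fst x \<and> n dvd snd x"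
  then show "pcong n (qminpoly D) (qlin x) 0"
    by (intro pcong_coeffwise) (auto simp: qlin_def coeff_pCons cong_0_iff split: nat.split)
qed

lemma qlin_pcong_imp_eq:
  assumes "x \<in> {0..<n} \<times> {0..<n}" "y \<in> {0..<n} \<times> {0..<n}"
    and "pcong n (qminpoly D) (qlin x) (qlin y)"
  shows "x = y"
proof -
  have "n > 0" using assms(1) by (auto simp: mem_Times_iff)
  have "qlin x - qlin y = qlin (fst x - fst y, snd x - snd y)" by (simp add: qlin_def)
  then have "n dvd fst x - fst y \<and> n dvd snd x - snd y"
    using assms(3) pcong_qlin_0_iff[OF \<open>n > 0\<close>] pcong_iff_diff by (metis fst_conv snd_conv)
  moreover have "u = v" if "u \<in> {0..<n}" "v \<in> {0..<n}" "n dvd u - v" for u v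
    using that by (metis atLeastLessThan_iff mod_eq_dvd_iff mod_pos_pos_trivial)
  ultimately show ?thesis using assms(1,2) by (simp add: mem_Times_iff prod_eq_iff)
qed

lemma qpow_mult: "n > 0 \<Longrightarrow> qpow n D x (a * b) = qpow n D (qpow n D x a) b"
proof (rule qlin_pcong_imp_eq[OF qpow_mem qpow_mem])
  assume "n > 0"
  have "pcong n (qminpoly D) (qlin (qpow n D x (a * b))) ((qlin x ^ a) ^ b)"
    unfolding power_mult[symmetric] by (rule qlin_qpow)
  also have "pcong n (qminpoly D) ((qlin x ^ a) ^ b) (qlin (qpow n D (qpow n D x a) b))"
    by (rule pcong_sym, rule pcong_trans[OF qlin_qpow pcong_power[OF qlin_qpow]])
  finally show "pcong n (qminpoly D) (qlin (qpow n D x (a * b))) (qlin (qpow n D (qpow n D x a) b))" .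
qed


section \<open>Norm, conjugation and the field I_N(D)\<close>

definition qnorm :: "int \<Rightarrow> int \<times> int \<Rightarrow> int" where
  "qnorm D x = (if D mod 4 = 1 then fst x ^ 2 + fst x * snd x - ((D - 1) div 4) * snd x ^ 2
                else fst x ^ 2 - D * snd x ^ 2)"

definition qcnj :: "int \<Rightarrow> int \<times> int \<Rightarrow> int \<times> int" where
  "qcnj D x = (if D mod 4 = 1 then (fst x + snd x, - snd x) else (fst x, - snd x))"

lemma qlin_qcnj_mult: "pcong n (qminpoly D) (qlin (qcnj D x) * qlin x) [:qnorm D x:]"
proof -
  have "qlin (qcnj D x) * qlin x = [:qnorm D x:] + qminpoly D * [:- (snd x ^ 2):]"
    by (auto simp: qlin_def qcnj_def qnorm_def qminpoly_def algebra_simps power2_eq_square)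
  then show ?thesis by (metis pcong_add_multiple)
qed

lemma qnorm_qG:
  assumes "w \<in> qG n D"
  shows "[qnorm D w = 1] (mod n)"
proof -
  have "D mod 4 = 1 \<Longrightarrow> (1 - D) div 4 = - ((D - 1) div 4)" by presburger
  with assms show ?thesis unfolding qG_def qnorm_def by auto
qed

lemma prime_dvd_norm_form:
  fixes n :: int
  assumes "prime n" and "\<not> QuadRes n D" and "n dvd u ^ 2 - D * b ^ 2"
  shows "n dvd u \<and> n dvd b"
proof (cases "n dvd b")
  case True
  then have "n dvd u ^ 2" using assms(3) by (metis dvd_add dvd_mult diff_add_cancel power2_eq_square)
  then show ?thesis using True assms(1) prime_dvd_power by blast
next
  case False
  then obtain b' where b': "[b * b' = 1] (mod n)"
    using assms(1) cong_solve_coprime_int prime_imp_coprime coprime_commute by metis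
  have "[u ^ 2 = D * b ^ 2] (mod n)" using assms(3) by (simp add: cong_iff_dvd_diff)
  then have "[(u * b') ^ 2 = D * (b * b') ^ 2] (mod n)"
    by (metis cong_scalar_right power_mult_distrib mult.assoc)
  also have "[D * (b * b') ^ 2 = D * 1 ^ 2] (mod n)" by (intro cong_mult cong_refl cong_pow b')
  finally have "QuadRes n D" unfolding QuadRes_def by auto
  with assms(2) show ?thesis by blast
qed

lemma prime_dvd_qnorm:
  fixes n :: int
  assumes "prime n" "odd n" "\<not> QuadRes n D" and "n dvd qnorm D x"
  shows "n dvd fst x \<and> n dvd snd x"
proof (cases "D mod 4 = 1")
  case True
  define t where "t = (D - 1) div 4"
  have D: "D = 4 * t + 1" using True unfolding t_def by presburger
  have "4 * qnorm D x = 4 * (fst x ^ 2 + fst x * snd x - t * snd x ^ 2)"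
    using True by (simp add: qnorm_def t_def)
  also have "\<dots> = (2 * fst x + snd x) ^ 2 - D * snd x ^ 2"
    unfolding D by (simp add: algebra_simps power2_eq_square)
  finally have "n dvd (2 * fst x + snd x) ^ 2 - D * snd x ^ 2"
    using assms(4) by (metis dvd_mult)
  then have "n dvd 2 * fst x + snd x \<and> n dvd snd x" by (rule prime_dvd_norm_form[OF assms(1,3)])
  then have "n dvd 2 * fst x" "n dvd snd x" by (auto simp: dvd_add_left_iff)
  moreover have "\<not> n dvd 2"
    using assms(1,2) by (metis prime_ge_2_int zdvd_imp_le order.antisym zero_less_numeral)
  ultimately show ?thesis using assms(1) prime_dvd_mult_iff by blast
next
  case False
  then show ?thesis using assms prime_dvd_norm_form[of n D "fst x" "snd x"] by (simp add: qnorm_def)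
qed

lemma qlin_no_zero_divisors:
  fixes n :: int
  assumes "prime n" "odd n" "\<not> QuadRes n D"
    and "pcong n (qminpoly D) (qlin x * qlin y) 0"
  shows "pcong n (qminpoly D) (qlin x) 0 \<or> pcong n (qminpoly D) (qlin y) 0"
proof (rule disjCI)
  have n: "n > 0" using assms(1) prime_gt_0_int by blast
  assume "\<not> pcong n (qminpoly D) (qlin y) 0"
  then have "\<not> n dvd qnorm D y" using prime_dvd_qnorm[OF assms(1-3)] pcong_qlin_0_iff[OF n] by blast
  have "qlin (qnorm D y * fst x, qnorm D y * snd x) = qlin x * [:qnorm D y:]" by (simp add: qlin_def)
  also have "pcong n (qminpoly D) \<dots> (qlin x * (qlin (qcnj D y) * qlin y))"
    by (rule pcong_mult[OF pcong_refl pcong_sym[OF qlin_qcnj_mult]])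
  also have "qlin x * (qlin (qcnj D y) * qlin y) = qlin (qcnj D y) * (qlin x * qlin y)"
    by (simp add: ac_simps)
  also have "pcong n (qminpoly D) \<dots> (qlin (qcnj D y) * 0)"
    by (rule pcong_mult[OF pcong_refl assms(4)])
  finally have "n dvd qnorm D y * fst x \<and> n dvd qnorm D y * snd x"
    using pcong_qlin_0_iff[OF n] by simp
  with \<open>\<not> n dvd qnorm D y\<close> show "pcong n (qminpoly D) (qlin x) 0"
    using assms(1) pcong_qlin_0_iff[OF n] prime_dvd_mult_iff by blast
qed

lemma pcong_power_prime_eq_neg:
  assumes "prime N" "odd N" "Legendre D (int N) = -1"
    and "pcong (int N) F (Y ^ 2) [:D:]"
  shows "pcong (int N) F (Y ^ N) (- Y)"
proof -
  define h where "h = (N - 1) div 2"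
  have N: "N = Suc (2 * h)" using assms(2) h_def by presburger
  have "2 < N" using assms(1,2) prime_ge_2_nat by (metis le_neq_implies_less even_numeral)
  then have "[Legendre D (int N) = D ^ h] (mod int N)"
    unfolding h_def by (rule euler_criterion[OF assms(1)])
  then have "[D ^ h = -1] (mod int N)" using assms(3) by (simp add: cong_sym)
  have "Y ^ N = Y * (Y ^ 2) ^ h" unfolding N by (simp add: power_mult)
  also have "pcong (int N) F \<dots> (Y * [:D:] ^ h)"
    by (rule pcong_mult[OF pcong_refl pcong_power[OF assms(4)]])
  also have "pcong (int N) F (Y * [:D:] ^ h) (Y * [:-1:])"
    unfolding poly_const_pow by (rule pcong_mult[OF pcong_refl pcong_const]) fact
  finally show ?thesis by (simp add: mult.commute)
qed

lemma pcong_X_power_prime: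
  assumes "prime N" "odd N" "Legendre D (int N) = -1"
  shows "pcong (int N) (qminpoly D) ([:0, 1:] ^ N) (qlin (qcnj D (0, 1)))"
proof (cases "D mod 4 = 1")
  case False
  have "[:0, 1:] ^ 2 = [:D:] + qminpoly D * 1"
    using False by (simp add: qminpoly_def power2_eq_square)
  then have "pcong (int N) (qminpoly D) ([:0, 1:] ^ 2) [:D:]" by (metis pcong_add_multiple)
  from pcong_power_prime_eq_neg[OF assms this] show ?thesis
    using False by (simp add: qlin_def qcnj_def)
next
  case True
  txt \<open>Here \<open>Y = 2x - 1\<close> represents \<open>\<surd>D\<close>; Frobenius on Y determines it on x since 2 is invertible.\<close>
  define Y where "Y = [:-1, 2 :: int:]"
  define t where "t = (D - 1) div 4"
  have D: "D = 4 * t + 1" using True unfolding t_def by presburger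
  have "Y ^ 2 = [:D:] + qminpoly D * [:4:]"
    using True unfolding Y_def qminpoly_def t_def[symmetric]
    by (simp add: D power2_eq_square algebra_simps)
  then have "pcong (int N) (qminpoly D) (Y ^ 2) [:D:]" by (metis pcong_add_multiple)
  then have Y_pow: "pcong (int N) (qminpoly D) (Y ^ N) (- Y)"
    by (rule pcong_power_prime_eq_neg[OF assms])
  have "[:2:] * [:0, 1:] ^ N = ([:-1:] + [:2:] * [:0, 1:] ^ N) - [:-1:]" by simp
  also have "pcong (int N) (qminpoly D) \<dots> (Y ^ N - [:-1:])"
    unfolding Y_def by (rule pcong_diff[OF pcong_sym[OF pcong_linear_power_prime[OF assms(1)]] pcong_refl])
  also have "pcong (int N) (qminpoly D) \<dots> (- Y - [:-1:])" by (rule pcong_diff[OF Y_pow pcong_refl])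
  also have "- Y - [:-1:] = [:2:] * qlin (qcnj D (0, 1))"
    using True by (simp add: Y_def qlin_def qcnj_def one_pCons)
  finally show ?thesis
    by (rule pcong_cancel_const[rotated]) (use assms(2) in simp)
qed

lemma qlin_power_prime:
  assumes "prime N" "odd N" "Legendre D (int N) = -1"
  shows "pcong (int N) (qminpoly D) (qlin x ^ N) (qlin (qcnj D x))"
proof -
  have "pcong (int N) (qminpoly D) (qlin x ^ N) ([:fst x:] + [:snd x:] * [:0, 1:] ^ N)"
    unfolding qlin_def by (rule pcong_linear_power_prime[OF assms(1)])
  also have "pcong (int N) (qminpoly D) \<dots> ([:fst x:] + [:snd x:] * qlin (qcnj D (0, 1)))"
    by (intro pcong_add pcong_mult pcong_refl pcong_X_power_prime[OF assms])
  also have "[:fst x:] + [:snd x:] * qlin (qcnj D (0, 1)) = qlin (qcnj D x)"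
    by (simp add: qlin_def qcnj_def)
  finally show ?thesis .
qed

lemma qpow_qG_Suc_prime:
  assumes "prime N" "odd N" "Legendre D (int N) = -1" and "w \<in> qG (int N) D"
  shows "qpow (int N) D w (N + 1) = qone (int N)"
proof (rule qlin_pcong_imp_eq[OF qpow_mem])
  show "0 < int N" using assms(1) prime_gt_0_nat by simp
  then show "qone (int N) \<in> {0..<int N} \<times> {0..<int N}" by (simp add: qone_def qnorm_red_mem)
  have "pcong (int N) (qminpoly D) (qlin (qpow (int N) D w (N + 1))) (qlin w ^ (N + 1))"
    by (rule qlin_qpow)
  also have "qlin w ^ (N + 1) = qlin w ^ N * qlin w" by simp
  also have "pcong (int N) (qminpoly D) \<dots> (qlin (qcnj D w) * qlin w)"
    by (rule pcong_mult[OF qlin_power_prime[OF assms(1-3)] pcong_refl])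
  also have "pcong (int N) (qminpoly D) \<dots> [:qnorm D w:]" by (rule qlin_qcnj_mult)
  also have "pcong (int N) (qminpoly D) \<dots> 1"
    using pcong_const[OF qnorm_qG[OF assms(4)]] by (simp add: one_pCons)
  also have "pcong (int N) (qminpoly D) 1 (qlin (qone (int N)))" by (rule pcong_sym[OF qlin_qone])
  finally show "pcong (int N) (qminpoly D) (qlin (qpow (int N) D w (N + 1))) (qlin (qone (int N)))" .
qed


section \<open>The cyclotomic polynomial of prime index\<close>

lemma coeff_geometric_poly: "coeff (\<Sum>i<p. monom 1 i) j = (if j < p then 1 else 0)"
  by (simp add: coeff_sum)

lemma degree_geometric_poly: "p > 0 \<Longrightarrow> degree (\<Sum>i<p. monom (1::'a::comm_ring_1) i) = p - 1"
  by (rule order.antisym, rule degree_le) (auto intro: le_degree simp: coeff_geometric_poly)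

lemma prod_nontrivial_roots_unity:
  assumes "p > 0"
  shows "(\<Prod>k\<in>{1..<p}. [:- cis (2 * pi * real k / real p), 1:]) = (\<Sum>i<p. monom 1 i)"
    (is "?P = ?Q")
proof (rule poly_eqI_degree_lead_coeff)
  define z where "z k = cis (2 * pi * real k / real p)" for k
  have inj: "inj_on z {..<p}"
    using Complex.bij_betw_roots_unity[OF assms] unfolding z_def bij_betw_def by blast
  have deg_P: "degree ?P = p - 1" by (subst degree_prod_sum_eq) auto
  moreover have "lead_coeff ?P = 1" by (simp add: lead_coeff_prod)
  ultimately show "coeff ?P (p - 1) = coeff ?Q (p - 1)"
    using assms by (simp add: coeff_geometric_poly)
  show "degree ?P \<le> p - 1" using deg_P by simp
  show "degree ?Q \<le> p - 1" using degree_geometric_poly[OF assms, where 'a = complex] by simp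
  show "p - 1 \<le> card (z ` {1..<p})"
    using inj by (subst card_image) (auto intro: inj_on_subset)
  fix w assume "w \<in> z ` {1..<p}"
  then obtain k where k: "k \<in> {1..<p}" "w = z k" by blast
  then have "w ^ p = 1"
    using Complex.bij_betw_roots_unity[OF assms] unfolding z_def bij_betw_def by auto
  moreover have "w \<noteq> 1"
  proof
    assume "w = 1"
    then have "z k = z 0" using k by (simp add: z_def)
    with inj k have "k = 0" by (auto simp: inj_on_def)
    with k show False by simp
  qed
  ultimately have "poly ?Q w = 0"
    by (simp add: poly_sum poly_monom geometric_sum)
  moreover have "poly ?P w = 0" using k by (auto simp: poly_prod z_def intro!: prod_zero)
  ultimately show "poly ?P w = poly ?Q w" by simp
qed

lemma cyclotomic_prime:
  assumes "prime p"
  shows "cyclotomic p = (\<Sum>i<p. monom 1 i)"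
proof -
  have "{k \<in> {1..p}. coprime k p} = {1..<p}"
  proof safe
    fix k assume "k \<in> {1..p}" "coprime k p"
    with assms show "k \<in> {1..<p}" by (cases "k = p") auto
  next
    fix k assume "k \<in> {1..<p}"
    then have "\<not> p dvd k" by (auto dest: dvd_imp_le)
    then show "coprime k p" using assms prime_imp_coprime coprime_commute by blast
  qed auto
  moreover have "map_poly of_int (\<Sum>i<p. monom 1 i) = (\<Sum>i<p. monom (1::complex) i)"
    by (rule poly_eqI) (simp add: coeff_map_poly coeff_geometric_poly)
  ultimately have roots: "map_poly of_int (\<Sum>i<p. monom 1 i)
      = (\<Prod>k\<in>{k \<in> {1..p}. coprime k p}. [:- cis (2 * pi * real k / real p), 1:])"
    using prod_nontrivial_roots_unity prime_gt_0_nat[OF assms] by simp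
  show ?thesis unfolding cyclotomic_def
  proof (rule the_equality)
    show "map_poly of_int (\<Sum>i<p. monom 1 i)
      = (\<Prod>k\<in>{k \<in> {1..p}. coprime k p}. [:- cis (2 * pi * real k / real p), 1:])"
      by (rule roots)
  next
    fix q assume "map_poly of_int q = (\<Prod>k\<in>{k \<in> {1..p}. coprime k p}. [:- cis (2 * pi * real k / real p), 1:])"
    then have "map_poly (of_int :: int \<Rightarrow> complex) q = map_poly of_int (\<Sum>i<p. monom 1 i)"
      using roots by simp
    then show "q = (\<Sum>i<p. monom 1 i)"
      by (intro poly_eqI) (metis coeff_map_poly of_int_0 of_int_eq_iff)
  qed
qed

lemma qlin_qpoly_eval_cyclotomic:
  assumes "prime p"
  shows "pcong n (qminpoly D) (qlin (qpoly_eval n D (cyclotomic p) x)) (\<Sum>i<p. qlin x ^ i)"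
proof -
  have "Suc (degree (\<Sum>i<p. monom 1 i :: int poly)) = p"
    using degree_geometric_poly[of p, where 'a = int] prime_gt_0_nat[OF assms] by simp
  then show ?thesis
    using qlin_qpoly_eval[of n D "\<Sum>i<p. monom 1 i" x]
    by (simp add: cyclotomic_prime[OF assms] coeff_geometric_poly one_pCons
        flip: lessThan_Suc_atMost)
qed

lemma qpoly_eval_cyclotomic_eq_0:
  fixes n :: int
  assumes "prime n" "odd n" "\<not> QuadRes n D" "prime p"
    and v: "v \<in> {0..<n} \<times> {0..<n}" "v \<noteq> qone n" "qpow n D v p = qone n"
  shows "qpoly_eval n D (cyclotomic p) v = qnorm_red n (0, 0)"
proof -
  have n: "n > 0" using assms(1) prime_gt_0_int by blast
  have one: "qone n \<in> {0..<n} \<times> {0..<n}" using n by (simp add: qone_def qnorm_red_mem)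
  define s where "s = qpoly_eval n D (cyclotomic p) v"
  have "qlin (fst v - 1, snd v) * qlin s = (qlin v - 1) * qlin s" by (simp add: qlin_def one_pCons)
  also have "pcong n (qminpoly D) \<dots> ((qlin v - 1) * (\<Sum>i<p. qlin v ^ i))"
    unfolding s_def by (rule pcong_mult[OF pcong_refl qlin_qpoly_eval_cyclotomic[OF assms(4)]])
  also have "(qlin v - 1) * (\<Sum>i<p. qlin v ^ i) = qlin v ^ p - 1" by (simp add: power_diff_1_eq)
  also have "pcong n (qminpoly D) \<dots> (qlin (qpow n D v p) - 1)"
    by (rule pcong_diff[OF pcong_sym[OF qlin_qpow] pcong_refl])
  also have "pcong n (qminpoly D) \<dots> (1 - 1)"
    unfolding v(3) by (rule pcong_diff[OF qlin_qone pcong_refl])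
  finally have "pcong n (qminpoly D) (qlin (fst v - 1, snd v)) 0 \<or> pcong n (qminpoly D) (qlin s) 0"
    using qlin_no_zero_divisors[OF assms(1-3)] by simp
  moreover have "\<not> pcong n (qminpoly D) (qlin (fst v - 1, snd v)) 0"
  proof
    assume "pcong n (qminpoly D) (qlin (fst v - 1, snd v)) 0"
    then have "pcong n (qminpoly D) (qlin v) 1"
      using pcong_iff_diff[of n "qminpoly D" "qlin v" 1] by (simp add: qlin_def one_pCons)
    then have "pcong n (qminpoly D) (qlin v) (qlin (qone n))"
      using pcong_sym[OF qlin_qone] by (rule pcong_trans)
    with v(2) show False using qlin_pcong_imp_eq[OF v(1) one] by blast
  qed
  ultimately have "pcong n (qminpoly D) (qlin s) (qlin (qnorm_red n (0, 0)))"
    using n by (simp add: qnorm_red_def qlin_def)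
  then show ?thesis
    unfolding s_def using qlin_pcong_imp_eq[OF qpoly_eval_mem qnorm_red_mem] n by blast
qed


theorem theorem1p3:
  fixes D :: int and p k l c N :: nat and w :: "int \<times> int"
  assumes "squarefree D"
    and "prime p" and "odd p"
    and "k > 0" and "l > 0" and "c > 0"
    and "coprime (c * k) p"
    and "int N = int (c * k * p ^ l) - 1"
    and "prime N" and "odd N"
    and "Legendre D (int N) = -1"
    and "w \<in> qG (int N) D"
  shows "qpow (int N) D w (c * k) = qone (int N) \<or>
         (\<exists>j<l. qpoly_eval (int N) D (cyclotomic p) (qpow (int N) D w (c * k * p ^ j))
                 = qnorm_red (int N) (0, 0))"
proof (cases "qpow (int N) D w (c * k) = qone (int N)")
  case False
  let ?P = "\<lambda>j. qpow (int N) D w (c * k * p ^ j) = qone (int N)"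
  have N: "int N > 0" using assms(9) prime_gt_0_nat by simp
  have "c * k * p ^ l = N + 1" using assms(8) by linarith
  then have "?P l" using qpow_qG_Suc_prime[OF assms(9-12)] by simp
  then obtain j where "j < l" "\<not> ?P j" "?P (Suc j)"
    using ex_least_nat_less[of ?P l] False by auto
  define v where "v = qpow (int N) D w (c * k * p ^ j)"
  have "qpow (int N) D v p = qpow (int N) D w (c * k * p ^ j * p)"
    unfolding v_def by (rule qpow_mult[OF N, symmetric])
  also have "c * k * p ^ j * p = c * k * p ^ Suc j" by simp
  finally have "qpow (int N) D v p = qone (int N)" using \<open>?P (Suc j)\<close> by simp
  moreover have "\<not> QuadRes (int N) D" using assms(11) by (auto simp: Legendre_def split: if_splits)
  ultimately have "qpoly_eval (int N) D (cyclotomic p) v = qnorm_red (int N) (0, 0)"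
    using qpoly_eval_cyclotomic_eq_0 assms(2,9,10) qpow_mem[OF N] \<open>\<not> ?P j\<close> by (simp add: v_def)
  with \<open>j < l\<close> show ?thesis unfolding v_def by blast
qed simp

end
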